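(* Let $X$ be a finite set with $N=|X|$ and $n=\binom N2$. Let $t,t'$ be two equidistant trees on taxa $X$ with the same coarse type $\{X_i\}_{i\in I}$, and let $\Omega>\omega>0$ be such that $\max\{\eta(t),\eta(t')\}\le\Omega$ and $\min\{\nu(t),\nu(t')\}\ge\omega$. Then \[ d_\Delta(t,t')\le (n+\iota)\,2(\Omega-\omega),\qquad \text{where } \iota=\sum_{i\in I}\binom{|X_i|}{2}. \] If moreover $t$ and $t'$ are both binary trees, then $d_\Delta(t,t')\le (2n-N+1)\,2(\Omega-\omega)$.
   Context: An equidistant tree $t$ on taxa $X$ is identified with the vector $(t_{ab})\in\mathbb{R}^n$ (coordinates indexed by unordered pairs of distinct taxa) of leaf-to-leaf path lengths; such vectors are exactly those for which, for all distinct $a,b,c$, $\max\{t_{ab},t_{ac},t_{bc}\}$ is attained at least twice. Trees are considered up to adding a multiple of $\mathbb{1}$ (changing all pendant edge lengths equally). The depth of a node is its distance from the root. Let $M=\max_{a\ne b}t_{ab}$; the depth of the lowest common ancestor of leaves $a\ne b$ equals $(M-t_{ab})/2$. Define $\eta(t)$ = maximal depth of an internal node $=\frac12(M-\min_{a\neq b}t_{ab})$ and $\nu(t)$ = minimal depth of an internal node other than the root $=\frac12\min\{M-t_{ab}: t_{ab}<M\}$ ($+\infty$ if there is none); both are invariant under adding multiples of $\mathbb{1}$. The coarse type of $t$ is the partition of $X$ into the leaf sets of the subtrees at the children of the root, i.e. distinct $a,b$ are in the same block iff $t_{ab}<M$. The tree is binary if every internal node has exactly two children, i.e. for all distinct $a,b,c$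 the numbers $t_{ab},t_{ac},t_{bc}$ are not all equal. $d_{\Delta}(x,y)=\sum_{i=1}^n (y_i-x_i) + n\max_{i}(x_i-y_i)$. *)

theory Defs
  imports Complex_Main "HOL-Library.Extended_Real"
begin

text \<open>A vector indexed by unordered pairs of distinct taxa is modelled as a function
  on two-element sets; only its values on pairs X matter.\<close>

definition pairs :: "'a set \<Rightarrow> 'a set set" where
  "pairs X = {{a, b} | a b. a \<in> X \<and> b \<in> X \<and> a \<noteq> b}"

definition equidistant :: "'a set \<Rightarrow> ('a set \<Rightarrow> real) \<Rightarrow> bool" where
  "equidistant X t \<longleftrightarrow>
     (\<forall>a\<in>X. \<forall>b\<in>X. \<forall>c\<in>X. a \<noteq> b \<and> a \<noteq> c \<and> b \<noteq> c \<longrightarrow>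
       (let m = Max {t {a, b}, t {a, c}, t {b, c}} in
          (t {a, b} = m \<and> t {a, c} = m) \<or> (t {a, b} = m \<and> t {b, c} = m)
          \<or> (t {a, c} = m \<and> t {b, c} = m)))"

definition maxdist :: "'a set \<Rightarrow> ('a set \<Rightarrow> real) \<Rightarrow> real" where
  "maxdist X t = Max (t ` pairs X)"

definition eta :: "'a set \<Rightarrow> ('a set \<Rightarrow> real) \<Rightarrow> real" where
  "eta X t = (maxdist X t - Min (t ` pairs X)) / 2"

definition nu :: "'a set \<Rightarrow> ('a set \<Rightarrow> real) \<Rightarrow> ereal" where
  "nu X t = (let S = {maxdist X t - t p | p. p \<in> pairs X \<and> t p < maxdist X t}
             in if S = {} then \<infinity> else ereal (Min S / 2))"

definition coarse_type :: "'a set \<Rightarrow> ('a set \<Rightarrow> real) \<Rightarrow> 'a set set" where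
  "coarse_type X t = {{b \<in> X. b = a \<or> t {a, b} < maxdist X t} | a. a \<in> X}"

definition binary_tree :: "'a set \<Rightarrow> ('a set \<Rightarrow> real) \<Rightarrow> bool" where
  "binary_tree X t \<longleftrightarrow>
     (\<forall>a\<in>X. \<forall>b\<in>X. \<forall>c\<in>X. a \<noteq> b \<and> a \<noteq> c \<and> b \<noteq> c \<longrightarrow>
       \<not> (t {a, b} = t {a, c} \<and> t {a, c} = t {b, c}))"

definition d_delta :: "'a set \<Rightarrow> ('a set \<Rightarrow> real) \<Rightarrow> ('a set \<Rightarrow> real) \<Rightarrow> real" where
  "d_delta X x y = (\<Sum>p\<in>pairs X. y p - x p)
      + real (card (pairs X)) * Max ((\<lambda>p. x p - y p) ` pairs X)"

end

theory Submission
  imports Defs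
begin

(* Write t p = M - 2 h p, where h p is the depth of the lowest common ancestor of the pair p.
   The pairs with h p > 0 ("inner pairs") are those lying inside one block of the coarse type,
   so t and t' have the same inner pairs W; on W both h and h' lie in [omega, Omega], outside W
   both vanish. Hence two coordinates of t - t' differ by at most 2 (Omega - omega) per inner
   pair involved, and d_delta t t' <= 2 (Omega - omega) (n + |W|). Finally |W| <= iota, and
   |W| <= n - N + 1: if {a, b} is separated at the root, every other leaf is separated at the
   root from a or from b, giving N - 1 pairs outside W. *)

lemma pairs_eq_card_2: "pairs X = {p. p \<subseteq> X \<and> card p = 2}"
  unfolding pairs_def by (auto simp: card_2_iff)

lemma finite_pairs: "finite X \<Longrightarrow> finite (pairs X)"
  unfolding pairs_eq_card_2 by (auto intro: finite_subset[of _ "Pow X"])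

lemma card_pairs: "finite X \<Longrightarrow> card (pairs X) = card X choose 2"
  unfolding pairs_eq_card_2 by (simp add: n_subsets)

lemma insert_in_pairs: "a \<in> X \<Longrightarrow> b \<in> X \<Longrightarrow> a \<noteq> b \<Longrightarrow> {a, b} \<in> pairs X"
  unfolding pairs_def by blast

lemma pairsE:
  assumes "p \<in> pairs X"
  obtains a b where "p = {a, b}" "a \<in> X" "b \<in> X" "a \<noteq> b"
  using assms unfolding pairs_def by blast

lemma le_maxdist: "finite X \<Longrightarrow> p \<in> pairs X \<Longrightarrow> t p \<le> maxdist X t"
  unfolding maxdist_def by (intro Max_ge finite_imageI finite_pairs imageI)

lemma maxdist_attained:
  assumes "finite X" "pairs X \<noteq> {}"
  obtains p where "p \<in> pairs X" "t p = maxdist X t"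
proof -
  have "maxdist X t \<in> t ` pairs X"
    unfolding maxdist_def using assms by (simp add: finite_pairs)
  then show ?thesis using that by (metis imageE)
qed

lemma equidistant_lt_maxdist_trans:
  assumes "finite X" "equidistant X t" "a \<in> X" "b \<in> X" "c \<in> X"
    and "t {a, b} < maxdist X t" "t {b, c} < maxdist X t" "a \<noteq> c"
  shows "t {a, c} < maxdist X t"
proof (rule ccontr)
  assume "\<not> ?thesis"
  with le_maxdist[where t = t, OF assms(1) insert_in_pairs[OF assms(3,5,8)]]
  have ac: "t {a, c} = maxdist X t" by simp
  with assms(6,7) have "a \<noteq> b" "b \<noteq> c" by auto
  with assms(2-5,8) have
    "let m = Max {t {a, b}, t {a, c}, t {b, c}} in
       (t {a, b} = m \<and> t {a, c} = m) \<or> (t {a, b} = m \<and> t {b, c} = m)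
       \<or> (t {a, c} = m \<and> t {b, c} = m)"
    unfolding equidistant_def by blast
  then show False
    using ac assms(6,7) by (simp add: Let_def max_def split: if_splits)
qed

definition root_block :: "'a set \<Rightarrow> ('a set \<Rightarrow> real) \<Rightarrow> 'a \<Rightarrow> 'a set" where
  "root_block X t a = {b \<in> X. b = a \<or> t {a, b} < maxdist X t}"

definition inner_pairs :: "'a set \<Rightarrow> ('a set \<Rightarrow> real) \<Rightarrow> 'a set set" where
  "inner_pairs X t = {p \<in> pairs X. t p < maxdist X t}"

lemma coarse_type_eq_root_blocks: "coarse_type X t = root_block X t ` X"
  unfolding coarse_type_def root_block_def by blast

lemma insert_in_inner_pairs_iff:
  "a \<in> X \<Longrightarrow> b \<in> X \<Longrightarrow> a \<noteq> b \<Longrightarrow> {a, b} \<in> inner_pairs X t \<longleftrightarrow> b \<in> root_block X t a"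
  unfolding inner_pairs_def root_block_def by (auto intro: insert_in_pairs)

lemma root_block_eq:
  assumes "finite X" "equidistant X t" "a \<in> X" "b \<in> root_block X t a"
  shows "root_block X t b = root_block X t a"
proof (cases "b = a")
  case False
  then have b: "b \<in> X" "t {a, b} < maxdist X t" "t {b, a} < maxdist X t"
    using assms(4) unfolding root_block_def by (auto simp: insert_commute)
  have "t {b, x} < maxdist X t \<longleftrightarrow> t {a, x} < maxdist X t"
    if "x \<in> X" "x \<noteq> a" "x \<noteq> b" for x
    using equidistant_lt_maxdist_trans[OF assms(1,2), of b a x]
      equidistant_lt_maxdist_trans[OF assms(1,2), of a b x] b assms(3) that by blast
  then have "x \<in> root_block X t b \<longleftrightarrow> x \<in> root_block X t a" for x
    using b False unfolding root_block_def
    by (cases "x = a \<or> x = b") auto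
  then show ?thesis by blast
qed simp

lemma root_block_eq_if_coarse_type_eq:
  assumes "finite X" "equidistant X t'" "coarse_type X t = coarse_type X t'" "a \<in> X"
  shows "root_block X t a = root_block X t' a"
proof -
  have "root_block X t a \<in> coarse_type X t'"
    by (metis assms(3,4) coarse_type_eq_root_blocks imageI)
  then obtain c where "c \<in> X" and c: "root_block X t a = root_block X t' c"
    unfolding coarse_type_eq_root_blocks by blast
  moreover have "a \<in> root_block X t' c"
    using c assms(4) unfolding root_block_def by blast
  ultimately show ?thesis
    using root_block_eq[OF assms(1,2)] by metis
qed

lemma inner_pairs_eq_if_coarse_type_eq:
  assumes "finite X" "equidistant X t'" "coarse_type X t = coarse_type X t'"
  shows "inner_pairs X t = inner_pairs X t'"
proof (intro set_eqI iffI)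
  have *: "p \<in> inner_pairs X t \<longleftrightarrow> p \<in> inner_pairs X t'" if "p \<in> pairs X" for p
    using that
  proof (cases rule: pairsE)
    case (1 a b)
    then show ?thesis
      using insert_in_inner_pairs_iff[of a X b] root_block_eq_if_coarse_type_eq[OF assms, of a]
      by simp
  qed
  show "p \<in> inner_pairs X t'" if "p \<in> inner_pairs X t" for p
    using * that unfolding inner_pairs_def by blast
  show "p \<in> inner_pairs X t" if "p \<in> inner_pairs X t'" for p
    using * that unfolding inner_pairs_def by blast
qed

lemma maxdist_diff_le_eta:
  assumes "finite X" "p \<in> pairs X"
  shows "maxdist X t - t p \<le> 2 * eta X t"
proof -
  have "Min (t ` pairs X) \<le> t p"
    using assms by (simp add: finite_pairs)
  then show ?thesis unfolding eta_def by simp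
qed

lemma nu_le_maxdist_diff:
  assumes "finite X" "p \<in> inner_pairs X t"
  shows "nu X t \<le> ereal ((maxdist X t - t p) / 2)"
proof -
  define S where "S = {maxdist X t - t q | q. q \<in> pairs X \<and> t q < maxdist X t}"
  have "S = (\<lambda>q. maxdist X t - t q) ` inner_pairs X t"
    unfolding S_def inner_pairs_def by blast
  then have "finite S"
    using assms(1) by (simp add: inner_pairs_def finite_pairs)
  moreover have "maxdist X t - t p \<in> S"
    using assms(2) unfolding S_def inner_pairs_def by blast
  ultimately have "S \<noteq> {}" "Min S \<le> maxdist X t - t p" by auto
  then show ?thesis unfolding nu_def S_def[symmetric] by simp
qed

lemma d_delta_le_sum:
  assumes "finite X"
    and "\<And>p q. p \<in> pairs X \<Longrightarrow> q \<in> pairs X \<Longrightarrow> (x q - y q) - (x p - y p) \<le> b p"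
  shows "d_delta X x y \<le> (\<Sum>p\<in>pairs X. b p)"
proof (cases "pairs X = {}")
  case False
  let ?D = "\<lambda>p. x p - y p"
  have "Max (?D ` pairs X) \<in> ?D ` pairs X"
    using False assms(1) by (simp add: finite_pairs)
  then obtain q where q: "q \<in> pairs X" "Max (?D ` pairs X) = ?D q" by blast
  have "d_delta X x y = (\<Sum>p\<in>pairs X. ?D q - ?D p)"
    unfolding d_delta_def q(2) by (simp add: sum_subtractf sum.distrib algebra_simps)
  also have "\<dots> \<le> (\<Sum>p\<in>pairs X. b p)"
    using assms(2) q(1) by (intro sum_mono) simp
  finally show ?thesis .
qed (simp add: d_delta_def)

lemma abs_depth_diff_le:
  assumes "finite X" "inner_pairs X t = inner_pairs X t'"
    and "eta X t \<le> \<Omega>" "eta X t' \<le> \<Omega>" "ereal \<omega> \<le> nu X t" "ereal \<omega> \<le> nu X t'"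
    and "p \<in> pairs X"
  shows "\<bar>(maxdist X t - t p) - (maxdist X t' - t' p)\<bar>
           \<le> 2 * (\<Omega> - \<omega>) * of_bool (p \<in> inner_pairs X t)"
proof (cases "p \<in> inner_pairs X t")
  case True
  have "ereal \<omega> \<le> ereal ((maxdist X t - t p) / 2)"
    using assms(5) nu_le_maxdist_diff[OF assms(1) True] by (rule order_trans)
  moreover have "ereal \<omega> \<le> ereal ((maxdist X t' - t' p) / 2)"
    using assms(6) nu_le_maxdist_diff[OF assms(1)] True assms(2) by (metis order_trans)
  moreover have "maxdist X t - t p \<le> 2 * \<Omega>" "maxdist X t' - t' p \<le> 2 * \<Omega>"
    using maxdist_diff_le_eta[OF assms(1,7), of t] maxdist_diff_le_eta[OF assms(1,7), of t']
      assms(3,4) by linarith+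
  ultimately show ?thesis using True by simp
next
  case False
  then have "t p = maxdist X t" "t' p = maxdist X t'"
    using assms(2,7) le_maxdist[OF assms(1,7)] unfolding inner_pairs_def
    by (auto simp: order_less_le)
  then show ?thesis using False by simp
qed

lemma d_delta_le_card_inner_pairs:
  assumes "finite X" "inner_pairs X t = inner_pairs X t'" "\<omega> \<le> \<Omega>"
    and "eta X t \<le> \<Omega>" "eta X t' \<le> \<Omega>" "ereal \<omega> \<le> nu X t" "ereal \<omega> \<le> nu X t'"
  shows "d_delta X t t'
           \<le> 2 * (\<Omega> - \<omega>) * (real (card (pairs X)) + real (card (inner_pairs X t)))"
proof -
  let ?c = "2 * (\<Omega> - \<omega>)"
  let ?W = "inner_pairs X t"
  have "(t q - t' q) - (t p - t' p) \<le> ?c * (1 + of_bool (p \<in> ?W))"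
    if "p \<in> pairs X" "q \<in> pairs X" for p q
    using abs_depth_diff_le[OF assms(1,2,4-7) that(1)] abs_depth_diff_le[OF assms(1,2,4-7) that(2)]
      assms(3) by (cases "p \<in> ?W"; cases "q \<in> ?W") (auto simp: abs_le_iff)
  then have "d_delta X t t' \<le> (\<Sum>p\<in>pairs X. ?c * (1 + of_bool (p \<in> ?W)))"
    by (rule d_delta_le_sum[OF assms(1)])
  also have "\<dots> = ?c * (real (card (pairs X)) + real (card ?W))"
    using assms(1) by (simp add: sum.distrib finite_pairs inner_pairs_def Int_def
      flip: sum_distrib_left)
  finally show ?thesis .
qed

lemma card_inner_pairs_le_sum_coarse_type:
  assumes "finite X"
  shows "card (inner_pairs X t) \<le> (\<Sum>B\<in>coarse_type X t. card B choose 2)"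
proof -
  have blocks_finite: "finite B" if "B \<in> coarse_type X t" for B
    using that assms unfolding coarse_type_def by auto
  have "inner_pairs X t \<subseteq> (\<Union>B\<in>coarse_type X t. pairs B)"
  proof
    fix p assume "p \<in> inner_pairs X t"
    then obtain a b where "p = {a, b}" "a \<in> X" "b \<in> X" "a \<noteq> b" "t {a, b} < maxdist X t"
      unfolding inner_pairs_def pairs_def by blast
    then have "root_block X t a \<in> coarse_type X t" "p \<in> pairs (root_block X t a)"
      unfolding coarse_type_eq_root_blocks root_block_def pairs_def by blast+
    then show "p \<in> (\<Union>B\<in>coarse_type X t. pairs B)" by blast
  qed
  moreover have "finite (coarse_type X t)"
    using assms unfolding coarse_type_eq_root_blocks by simp
  ultimately have "card (inner_pairs X t) \<le> card (\<Union>B\<in>coarse_type X t. pairs B)"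
    using blocks_finite by (intro card_mono) (auto simp: finite_pairs)
  also have "\<dots> \<le> (\<Sum>B\<in>coarse_type X t. card (pairs B))"
    by (rule card_UN_le) fact
  also have "\<dots> = (\<Sum>B\<in>coarse_type X t. card B choose 2)"
    using blocks_finite by (simp add: card_pairs)
  finally show ?thesis .
qed

lemma card_inner_pairs_add_card_le:
  assumes "finite X" "equidistant X t"
  shows "card (inner_pairs X t) + card X \<le> card (pairs X) + 1"
proof (cases "pairs X = {}")
  case True
  then have "card X \<le> 1"
    using insert_in_pairs[of _ X] by (auto simp: card_le_Suc0_iff_eq[OF assms(1)])
  then show ?thesis using True by (simp add: inner_pairs_def)
next
  case False
  then obtain p where "p \<in> pairs X" "t p = maxdist X t"
    using maxdist_attained[OF assms(1)] by blast
  then obtain a b where ab: "a \<in> X" "b \<in> X" "a \<noteq> b" "{a, b} \<notin> inner_pairs X t"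
    unfolding inner_pairs_def by (auto elim: pairsE)
  define f where "f c = (if {a, c} \<in> inner_pairs X t then {b, c} else {a, c})" for c
  have "f c \<in> pairs X - inner_pairs X t" if c: "c \<in> X - {a}" for c
  proof (cases "{a, c} \<in> inner_pairs X t")
    case True
    then have "c \<noteq> b" using ab(4) by blast
    have "{b, c} \<notin> inner_pairs X t"
    proof
      assume "{b, c} \<in> inner_pairs X t"
      with True have "t {a, c} < maxdist X t" "t {c, b} < maxdist X t"
        by (simp_all add: inner_pairs_def insert_commute)
      then have "{a, b} \<in> inner_pairs X t"
        using equidistant_lt_maxdist_trans[OF assms, of a c b] ab c insert_in_pairs[of a X b]
        by (auto simp: inner_pairs_def)
      with ab(4) show False ..
    qed
    then show ?thesis
      using True ab(2) c \<open>c \<noteq> b\<close> by (simp add: f_def insert_in_pairs)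
  qed (use ab(1) c in \<open>auto simp: f_def intro: insert_in_pairs\<close>)
  moreover have "inj_on f (X - {a})"
    using ab(3) by (auto simp: inj_on_def f_def doubleton_eq_iff split: if_splits)
  ultimately have "card (X - {a}) \<le> card (pairs X - inner_pairs X t)"
    using assms(1) by (intro card_inj_on_le) (auto simp: finite_pairs)
  moreover have W: "inner_pairs X t \<subseteq> pairs X" "finite (pairs X)"
    using assms(1) by (auto simp: inner_pairs_def finite_pairs)
  moreover have "0 < card X"
    using ab(1) assms(1) card_gt_0_iff by blast
  ultimately show ?thesis
    using ab(1) assms(1) card_mono[OF W(2,1)]
    by (simp add: card_Diff_subset[OF finite_subset[OF W]])
qed

theorem mainTheorem5:
  fixes X :: "'a set" and t t' :: "'a set \<Rightarrow> real" and \<Omega> \<omega> :: real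
  assumes "finite X"
    and "equidistant X t" and "equidistant X t'"
    and "coarse_type X t = coarse_type X t'"
    and "\<Omega> > \<omega>" and "\<omega> > 0"
    and "max (eta X t) (eta X t') \<le> \<Omega>"
    and "min (nu X t) (nu X t') \<ge> ereal \<omega>"
  shows "d_delta X t t' \<le>
           (real (card X choose 2) + (\<Sum>B\<in>coarse_type X t. real (card B choose 2)))
             * (2 * (\<Omega> - \<omega>)) \<and>
         (binary_tree X t \<and> binary_tree X t' \<longrightarrow>
         d_delta X t t' \<le> (2 * real (card X choose 2) - real (card X) + 1) * (2 * (\<Omega> - \<omega>)))"
proof -
  let ?c = "2 * (\<Omega> - \<omega>)" and ?W = "inner_pairs X t"
  have "inner_pairs X t = inner_pairs X t'"
    using inner_pairs_eq_if_coarse_type_eq[OF assms(1,3,4)] .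
  then have "d_delta X t t' \<le> (real (card X choose 2) + real (card ?W)) * ?c"
    using d_delta_le_card_inner_pairs[of X t t' \<omega> \<Omega>] assms(1,5,7,8)
    by (simp add: card_pairs[OF assms(1)] mult.commute)
  then have bound: "d_delta X t t' \<le> (real (card X choose 2) + w) * ?c"
    if "real (card ?W) \<le> w" for w
    using that assms(5) by (smt (verit) mult_right_mono)
  have iota: "real (card ?W) \<le> (\<Sum>B\<in>coarse_type X t. real (card B choose 2))"
    using card_inner_pairs_le_sum_coarse_type[OF assms(1), of t]
    by (simp flip: of_nat_sum of_nat_le_iff)
  \<comment> \<open>This bound holds for every equidistant tree.\<close>
  have cross: "real (card ?W) \<le> real (card X choose 2) - real (card X) + 1"
    using of_nat_mono[OF card_inner_pairs_add_card_le[OF assms(1,2)], where 'a = real]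
    by (simp add: card_pairs[OF assms(1)])
  show ?thesis
    using bound[OF iota] bound[OF cross] by (simp add: algebra_simps)
qed

end
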